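(* Let $\gamma_1\in\Gamma/\Psi$. The graded module $\mathrm{gr}_{\mathcal F(\gamma_1)}\mathcal P_{\gamma_1}/\mathcal P_{\gamma_1}^+=\bigoplus_{\gamma\in q^{-1}(\gamma_1)}\mathcal P_\gamma/\mathcal P_\gamma^+$ is a finitely generated module over $\mathrm{gr}_{\bar\nu}R/P=\bigoplus_{\delta\in\Psi,\ \delta\ge 0}\mathcal P_\delta/\mathcal P_\delta^+$ if and only if the set $$F_{\gamma_1}=\{\nu(f)\mid f\in R,\ \nu_1(f)=\gamma_1\}$$ is a finitely generated module over the semigroup $\bar F=\bar\nu\big((R/P)\setminus\{0\}\big)$.
   Context: Let $(R,m)$ be a noetherian local domain with residue field $K$, and let $\nu$ be a valuation of the fraction field of $R$ with valuation ring $(R_\nu,m_\nu)$ such that $R\subset R_\nu$, $m_\nu\cap R=m$, and the residual map $R/m\to R_\nu/m_\nu$ is an isomorphism. Let $\Gamma$ be the value group of $\nu$, assumed of finite rank, let $\Psi\subset\Gamma$ be the smallest nonzero convex subgroup (the convex subgroup of rank one), and let $q\colon\Gamma\to\Gamma/\Psi$ be the quotient map. Let $\nu_1=q\circ\nu$ be the valuation (with values in $\Gamma/\Psi$) with which $\nu$ is composed, let $P=\{f\in R\mid \nu_1(f)>0\}$ be its center on $R$, and let $\bar\nu$ be the residual valuation on $R/P$, given by $\bar\nu(f \bmod P)=\nu(f)\in\Psi$ for $f\in R\setminus P$. For $\gamma\in\Gamma$ put $\mathcal P_\gamma=\{f\in R\mid\nu(f)\ge\gamma\}$, $\mathcal P_\gamma^+=\{f\in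 R\mid \nu(f)>\gamma\}$; for $\gamma_1\in\Gamma/\Psi$ put $\mathcal P_{\gamma_1}=\{f\in R\mid \nu_1(f)\ge\gamma_1\}$, $\mathcal P_{\gamma_1}^+=\{f\in R\mid\nu_1(f)>\gamma_1\}$. The ring $\mathrm{gr}_{\bar\nu}R/P=\bigoplus_{\delta\in\Psi,\delta\ge0}\mathcal P_\delta/\mathcal P_\delta^+$ is the graded ring of $R/P$ for $\bar\nu$, and $\bigoplus_{\gamma\in q^{-1}(\gamma_1)}\mathcal P_\gamma/\mathcal P_\gamma^+$ (the graded module associated to the filtration of $\mathcal P_{\gamma_1}/\mathcal P^+_{\gamma_1}$ by the images of the $\mathcal P_\gamma$, $\gamma\in q^{-1}(\gamma_1)$) is a graded module over it via the multiplication maps $\mathcal P_\delta/\mathcal P_\delta^+\times\mathcal P_\gamma/\mathcal P_\gamma^+\to\mathcal P_{\delta+\gamma}/\mathcal P_{\delta+\gamma}^+$. If $S$ is a commutative semigroup, a subset $F$ of $\Gamma$ with $S+F\subseteq F$ is an $S$-module; it is finitely generated if there are $m_1,\dots,m_k\in F$ with $F=\bigcup_{i=1}^k(S+m_i)$. *)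

theory Defs
  imports Main
begin

definition is_ideal :: "'a::comm_ring_1 set \<Rightarrow> bool" where
  "is_ideal I \<longleftrightarrow> 0 \<in> I \<and> (\<forall>x\<in>I. \<forall>y\<in>I. x + y \<in> I) \<and> (\<forall>r. \<forall>x\<in>I. r * x \<in> I)"

definition ideal_gen :: "'a::comm_ring_1 set \<Rightarrow> 'a set" where
  "ideal_gen S = {\<Sum>s\<in>S. c s * s | c. True}"

definition noetherian_ring :: "'a::comm_ring_1 itself \<Rightarrow> bool" where
  "noetherian_ring _ \<longleftrightarrow> (\<forall>I::'a set. is_ideal I \<longrightarrow> (\<exists>S. finite S \<and> I = ideal_gen S))"

definition local_ring :: "'a::comm_ring_1 itself \<Rightarrow> bool" where
  "local_ring _ \<longleftrightarrow> is_ideal {x::'a. \<not> x dvd 1}"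

text \<open>nu is the valuation of the fraction field of R restricted to R - {0}
  (the value at 0, i.e. infinity, is never used).  The value group is the whole type 'g.\<close>
definition valuation_on_ring :: "('a::idom \<Rightarrow> 'g::linordered_ab_group_add) \<Rightarrow> bool" where
  "valuation_on_ring \<nu> \<longleftrightarrow>
     (\<forall>f g. f \<noteq> 0 \<longrightarrow> g \<noteq> 0 \<longrightarrow> \<nu> (f * g) = \<nu> f + \<nu> g) \<and>
     (\<forall>f g. f \<noteq> 0 \<longrightarrow> g \<noteq> 0 \<longrightarrow> f + g \<noteq> 0 \<longrightarrow> min (\<nu> f) (\<nu> g) \<le> \<nu> (f + g))"

text \<open>The value group of nu (on Frac R) is the whole of 'g: every value is nu(f/g).\<close>
definition value_group_all :: "('a::idom \<Rightarrow> 'g::linordered_ab_group_add) \<Rightarrow> bool" where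
  "value_group_all \<nu> \<longleftrightarrow> (\<forall>\<gamma>. \<exists>f g. f \<noteq> 0 \<and> g \<noteq> 0 \<and> \<gamma> = \<nu> f - \<nu> g)"

text \<open>R is contained in R_nu and m_nu \<inter> R = m (the non-units of the local ring R).\<close>
definition centered_on_max :: "('a::idom \<Rightarrow> 'g::linordered_ab_group_add) \<Rightarrow> bool" where
  "centered_on_max \<nu> \<longleftrightarrow> (\<forall>f. f \<noteq> 0 \<longrightarrow> 0 \<le> \<nu> f \<and> (0 < \<nu> f \<longleftrightarrow> \<not> f dvd 1))"

text \<open>The residual map R/m \<rightarrow> R_nu/m_nu is onto (injectivity follows from m_nu \<inter> R = m):
  every element f/g of Frac R with value 0 is congruent modulo m_nu to some r in R.\<close>
definition residually_rational :: "('a::idom \<Rightarrow> 'g::linordered_ab_group_add) \<Rightarrow> bool" where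
  "residually_rational \<nu> \<longleftrightarrow>
     (\<forall>f g. f \<noteq> 0 \<longrightarrow> g \<noteq> 0 \<longrightarrow> \<nu> f = \<nu> g \<longrightarrow>
        (\<exists>r. f - r * g = 0 \<or> \<nu> g < \<nu> (f - r * g)))"

definition convex_subgroup :: "'g::linordered_ab_group_add set \<Rightarrow> bool" where
  "convex_subgroup H \<longleftrightarrow> 0 \<in> H \<and> (\<forall>x\<in>H. \<forall>y\<in>H. x + y \<in> H) \<and> (\<forall>x\<in>H. - x \<in> H) \<and>
     (\<forall>x y z. x \<in> H \<longrightarrow> z \<in> H \<longrightarrow> x \<le> y \<longrightarrow> y \<le> z \<longrightarrow> y \<in> H)"

definition finite_rank :: "'g::linordered_ab_group_add itself \<Rightarrow> bool" where
  "finite_rank _ \<longleftrightarrow> finite {H::'g set. convex_subgroup H}"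

definition smallest_nonzero_convex :: "'g::linordered_ab_group_add set \<Rightarrow> bool" where
  "smallest_nonzero_convex \<Psi> \<longleftrightarrow> convex_subgroup \<Psi> \<and> \<Psi> \<noteq> {0} \<and>
     (\<forall>H. convex_subgroup H \<longrightarrow> H \<noteq> {0} \<longrightarrow> \<Psi> \<subseteq> H)"

definition Pge :: "('a::idom \<Rightarrow> 'g::linordered_ab_group_add) \<Rightarrow> 'g \<Rightarrow> 'a set" where
  "Pge \<nu> \<gamma> = {f. f = 0 \<or> \<gamma> \<le> \<nu> f}"

definition Pgt :: "('a::idom \<Rightarrow> 'g::linordered_ab_group_add) \<Rightarrow> 'g \<Rightarrow> 'a set" where
  "Pgt \<nu> \<gamma> = {f. f = 0 \<or> \<gamma> < \<nu> f}"

text \<open>An element of  gr_{nubar} R/P = (+)_{delta in Psi, delta >= 0} P_delta/P_delta^+  is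
  represented by a finitely supported family a with a delta in P_delta, supported on
  Psi_{>=0}; the element is the sum of the classes of a delta in P_delta/P_delta^+.\<close>
definition gr_ring_reps :: "('a::idom \<Rightarrow> 'g::linordered_ab_group_add) \<Rightarrow> 'g set \<Rightarrow> ('g \<Rightarrow> 'a) set" where
  "gr_ring_reps \<nu> \<Psi> = {a. finite {\<delta>. a \<delta> \<noteq> 0} \<and>
      (\<forall>\<delta>. a \<delta> \<noteq> 0 \<longrightarrow> \<delta> \<in> \<Psi> \<and> 0 \<le> \<delta> \<and> a \<delta> \<in> Pge \<nu> \<delta>)}"

text \<open>An element of  (+)_{gamma in q^{-1}(gamma1)} P_gamma/P_gamma^+, where gamma1 = q(gamma0),
  i.e. q^{-1}(gamma1) = gamma0 + Psi, is represented likewise.\<close>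
definition gr_mod_reps :: "('a::idom \<Rightarrow> 'g::linordered_ab_group_add) \<Rightarrow> 'g set \<Rightarrow> 'g \<Rightarrow> ('g \<Rightarrow> 'a) set" where
  "gr_mod_reps \<nu> \<Psi> \<gamma>0 = {c. finite {\<gamma>. c \<gamma> \<noteq> 0} \<and>
      (\<forall>\<gamma>. c \<gamma> \<noteq> 0 \<longrightarrow> \<gamma> - \<gamma>0 \<in> \<Psi> \<and> c \<gamma> \<in> Pge \<nu> \<gamma>)}"

text \<open>Two representatives give the same element iff they agree componentwise modulo P_gamma^+.\<close>
definition gr_eq :: "('a::idom \<Rightarrow> 'g::linordered_ab_group_add) \<Rightarrow> ('g \<Rightarrow> 'a) \<Rightarrow> ('g \<Rightarrow> 'a) \<Rightarrow> bool" where
  "gr_eq \<nu> c c' \<longleftrightarrow> (\<forall>\<gamma>. c \<gamma> - c' \<gamma> \<in> Pgt \<nu> \<gamma>)"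

text \<open>Module action induced by  P_delta/P_delta^+ x P_gamma/P_gamma^+ -> P_{delta+gamma}/P_{delta+gamma}^+.\<close>
definition gr_act :: "('g::linordered_ab_group_add \<Rightarrow> 'a::idom) \<Rightarrow> ('g \<Rightarrow> 'a) \<Rightarrow> ('g \<Rightarrow> 'a)" where
  "gr_act a c = (\<lambda>\<gamma>. \<Sum>\<delta>\<in>{\<delta>. a \<delta> \<noteq> 0}. a \<delta> * c (\<gamma> - \<delta>))"

definition gr_module_fg :: "('a::idom \<Rightarrow> 'g::linordered_ab_group_add) \<Rightarrow> 'g set \<Rightarrow> 'g \<Rightarrow> bool" where
  "gr_module_fg \<nu> \<Psi> \<gamma>0 \<longleftrightarrow>
     (\<exists>G. finite G \<and> G \<subseteq> gr_mod_reps \<nu> \<Psi> \<gamma>0 \<and>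
        (\<forall>c\<in>gr_mod_reps \<nu> \<Psi> \<gamma>0. \<exists>a. (\<forall>g\<in>G. a g \<in> gr_ring_reps \<nu> \<Psi>) \<and>
            gr_eq \<nu> c (\<lambda>\<gamma>. \<Sum>g\<in>G. gr_act (a g) g \<gamma>)))"

definition fg_semigroup_module :: "'g::ab_group_add set \<Rightarrow> 'g set \<Rightarrow> bool" where
  "fg_semigroup_module S F \<longleftrightarrow> (\<forall>s\<in>S. \<forall>x\<in>F. s + x \<in> F) \<and>
     (\<exists>M. finite M \<and> M \<subseteq> F \<and> F = {s + m | s m. s \<in> S \<and> m \<in> M})"

text \<open>Fbar = nubar((R/P) - {0}) = {nu f | f in R - P}; since nu >= 0 on R, f \<notin> P iff
  f \<noteq> 0 and nu f \<in> Psi.\<close>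
definition Fbar :: "('a::idom \<Rightarrow> 'g::linordered_ab_group_add) \<Rightarrow> 'g set \<Rightarrow> 'g set" where
  "Fbar \<nu> \<Psi> = {\<nu> f | f. f \<noteq> 0 \<and> \<nu> f \<in> \<Psi>}"

text \<open>F_{gamma1} = {nu f | f in R, nu_1 f = gamma1}, where gamma1 = q(gamma0).\<close>
definition F_level :: "('a::idom \<Rightarrow> 'g::linordered_ab_group_add) \<Rightarrow> 'g set \<Rightarrow> 'g \<Rightarrow> 'g set" where
  "F_level \<nu> \<Psi> \<gamma>0 = {\<nu> f | f. f \<noteq> 0 \<and> \<nu> f - \<gamma>0 \<in> \<Psi>}"

end

theory Submission
  imports Defs
begin

text \<open>
  The proof is a comparison of initial forms.  An element f with nu f = gamma has a nonzero
  initial form in degree gamma, and products of initial forms are initial forms of products.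
  (=>) If finitely many generators span the module, expanding the initial form of any f in
  the generators shows that some product of a homogeneous coefficient of degree delta in Fbar
  and a component of a generator of exact value nu f - delta must carry the leading term;
  so the exact values of the generator components generate F_{gamma1} over Fbar.
  (<=) Conversely, if m_1..m_k generate F_{gamma1}, choose f_i with nu f_i = m_i.  Every element
  of the module is a finite sum of homogeneous pieces; a piece of exact value gamma = nu h + m_i
  is, because the residue field of nu is that of R, congruent modulo P_gamma^+ to r h f_i.
  Hence the initial forms of the f_i generate.
\<close>

lemma valuation_mult:
  assumes "valuation_on_ring \<nu>" "f \<noteq> 0" "g \<noteq> 0"
  shows "\<nu> (f * g) = \<nu> f + \<nu> g"
  using assms unfolding valuation_on_ring_def by blast

lemma upward_value_set_add:
  assumes val: "valuation_on_ring \<nu>"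
    and up: "\<And>u v. u \<in> U \<Longrightarrow> u \<le> v \<Longrightarrow> v \<in> U"
    and x: "x = 0 \<or> \<nu> x \<in> U" and y: "y = 0 \<or> \<nu> y \<in> U"
  shows "x + y = 0 \<or> \<nu> (x + y) \<in> U"
proof (cases "x = 0 \<or> y = 0 \<or> x + y = 0")
  case True
  then show ?thesis using x y by auto
next
  case False
  then have "min (\<nu> x) (\<nu> y) \<le> \<nu> (x + y)"
    using val unfolding valuation_on_ring_def by blast
  moreover have "min (\<nu> x) (\<nu> y) \<in> U"
    using x y False by (simp add: min_def)
  ultimately show ?thesis using up by blast
qed

lemma upward_value_set_sum:
  assumes val: "valuation_on_ring \<nu>"
    and up: "\<And>u v. u \<in> U \<Longrightarrow> u \<le> v \<Longrightarrow> v \<in> U"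
  shows "(\<And>i. i \<in> I \<Longrightarrow> h i = 0 \<or> \<nu> (h i) \<in> U) \<Longrightarrow> sum h I = 0 \<or> \<nu> (sum h I) \<in> U"
proof (induction I rule: infinite_finite_induct)
  case (insert i I)
  then show ?case using upward_value_set_add[OF val up] by simp
qed simp_all

lemma Pgt_add:
  assumes "valuation_on_ring \<nu>" "x \<in> Pgt \<nu> \<gamma>" "y \<in> Pgt \<nu> \<gamma>"
  shows "x + y \<in> Pgt \<nu> \<gamma>"
  using upward_value_set_add[OF assms(1), of "{v. \<gamma> < v}"] assms(2,3)
  unfolding Pgt_def by (auto intro: less_le_trans)

lemma Pgt_sum:
  assumes "valuation_on_ring \<nu>" "\<And>i. i \<in> I \<Longrightarrow> h i \<in> Pgt \<nu> \<gamma>"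
  shows "sum h I \<in> Pgt \<nu> \<gamma>"
  using upward_value_set_sum[OF assms(1), of "{v. \<gamma> < v}" I h] assms(2)
  unfolding Pgt_def by (auto intro: less_le_trans)

lemma Pge_sum:
  assumes "valuation_on_ring \<nu>" "\<And>i. i \<in> I \<Longrightarrow> h i \<in> Pge \<nu> \<gamma>"
  shows "sum h I \<in> Pge \<nu> \<gamma>"
  using upward_value_set_sum[OF assms(1), of "{v. \<gamma> \<le> v}" I h] assms(2)
  unfolding Pge_def by (auto intro: order_trans)

lemma Pge_mult:
  assumes val: "valuation_on_ring \<nu>" and nonneg: "\<And>f. f \<noteq> 0 \<Longrightarrow> 0 \<le> \<nu> f"
    and x: "x \<in> Pge \<nu> \<delta>"
  shows "r * x \<in> Pge \<nu> \<delta>"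
proof (cases "r = 0 \<or> x = 0")
  case False
  then have "\<nu> (r * x) = \<nu> r + \<nu> x" using valuation_mult[OF val] by blast
  moreover have "0 \<le> \<nu> r" "\<delta> \<le> \<nu> x" using nonneg x False unfolding Pge_def by auto
  ultimately show ?thesis unfolding Pge_def by (simp add: add_increasing)
qed (use x in \<open>auto simp: Pge_def\<close>)

text \<open>If a and b are bounded below by d and x - d and their sum is at most x, the bounds are
  attained.  This is how the leading term of a product of graded pieces is recognised.\<close>
lemma sum_of_lower_bounds_eq:
  fixes a b d x :: "'g::linordered_ab_group_add"
  assumes "d \<le> a" "x - d \<le> b" "a + b \<le> x"
  shows "a = d \<and> b = x - d"
proof -
  have "d + (x - d) \<le> a + b" using assms(1,2) by (rule add_mono)
  then have "a + b = x" using assms(3) by simp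
  then show ?thesis using assms(1,2) by (metis add_le_cancel_left antisym diff_add_cancel add.commute)
qed

text \<open>The family with the single component f in degree gamma; for f in P_gamma it represents the
  class of f in P_gamma/P_gamma^+.\<close>
definition homog :: "'g \<Rightarrow> 'a \<Rightarrow> ('g \<Rightarrow> 'a::zero)" where
  "homog \<gamma> f = (\<lambda>\<delta>. if \<delta> = \<gamma> then f else 0)"

lemma homog_mod_rep:
  assumes "\<gamma> - \<gamma>0 \<in> \<Psi>" "f \<in> Pge \<nu> \<gamma>"
  shows "homog \<gamma> f \<in> gr_mod_reps \<nu> \<Psi> \<gamma>0"
proof -
  have "{\<delta>. homog \<gamma> f \<delta> \<noteq> 0} \<subseteq> {\<gamma>}" by (auto simp: homog_def)
  then show ?thesis using assms unfolding gr_mod_reps_def by (auto simp: homog_def intro: finite_subset)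
qed

lemma homog_ring_rep:
  assumes "\<delta> \<in> \<Psi>" "0 \<le> \<delta>" "f \<in> Pge \<nu> \<delta>"
  shows "homog \<delta> f \<in> gr_ring_reps \<nu> \<Psi>"
proof -
  have "{\<epsilon>. homog \<delta> f \<epsilon> \<noteq> 0} \<subseteq> {\<delta>}" by (auto simp: homog_def)
  then show ?thesis using assms unfolding gr_ring_reps_def by (auto simp: homog_def intro: finite_subset)
qed

lemma homog_decomposition:
  assumes "finite {\<gamma>. c \<gamma> \<noteq> 0}"
  shows "c = (\<lambda>\<gamma>. \<Sum>\<gamma>'\<in>{\<gamma>. c \<gamma> \<noteq> 0}. homog \<gamma>' (c \<gamma>') \<gamma>)"
  unfolding homog_def using assms by (auto simp: fun_eq_iff)

lemma gr_act_superset: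
  assumes "finite S" "{\<delta>. a \<delta> \<noteq> 0} \<subseteq> S"
  shows "gr_act a c \<gamma> = (\<Sum>\<delta>\<in>S. a \<delta> * c (\<gamma> - \<delta>))"
  unfolding gr_act_def using assms by (intro sum.mono_neutral_left) auto

lemma gr_act_homog:
  assumes "finite {\<delta>. a \<delta> \<noteq> 0}"
  shows "gr_act a (homog m y) \<gamma> = a (\<gamma> - m) * y"
proof -
  have "gr_act a (homog m y) \<gamma> = (\<Sum>\<delta>\<in>insert (\<gamma> - m) {\<delta>. a \<delta> \<noteq> 0}. a \<delta> * homog m y (\<gamma> - \<delta>))"
    using assms by (intro gr_act_superset) auto
  also have "\<dots> = (\<Sum>\<delta>\<in>insert (\<gamma> - m) {\<delta>. a \<delta> \<noteq> 0}. if \<delta> = \<gamma> - m then a \<delta> * y else 0)"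
    by (intro sum.cong) (auto simp: homog_def)
  also have "\<dots> = a (\<gamma> - m) * y"
    using assms by simp
  finally show ?thesis .
qed

definition gr_span :: "('a::idom \<Rightarrow> 'g::linordered_ab_group_add) \<Rightarrow> 'g set \<Rightarrow> ('g \<Rightarrow> 'a) set \<Rightarrow> ('g \<Rightarrow> 'a) set" where
  "gr_span \<nu> \<Psi> G = {c. \<exists>a. (\<forall>g\<in>G. a g \<in> gr_ring_reps \<nu> \<Psi>) \<and>
      gr_eq \<nu> c (\<lambda>\<gamma>. \<Sum>g\<in>G. gr_act (a g) g \<gamma>)}"

lemma gr_module_fg_iff_span:
  "gr_module_fg \<nu> \<Psi> \<gamma>0 \<longleftrightarrow>
     (\<exists>G. finite G \<and> G \<subseteq> gr_mod_reps \<nu> \<Psi> \<gamma>0 \<and> gr_mod_reps \<nu> \<Psi> \<gamma>0 \<subseteq> gr_span \<nu> \<Psi> G)"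
  unfolding gr_module_fg_def gr_span_def by blast

lemma gr_ring_reps_sum:
  assumes val: "valuation_on_ring \<nu>" and fin: "finite I"
    and a: "\<And>i. i \<in> I \<Longrightarrow> a i \<in> gr_ring_reps \<nu> \<Psi>"
  shows "(\<lambda>\<delta>. \<Sum>i\<in>I. a i \<delta>) \<in> gr_ring_reps \<nu> \<Psi>"
proof -
  have supp: "{\<delta>. (\<Sum>i\<in>I. a i \<delta>) \<noteq> 0} \<subseteq> (\<Union>i\<in>I. {\<delta>. a i \<delta> \<noteq> 0})"
    by (auto elim: sum.not_neutral_contains_not_neutral)
  moreover have "finite (\<Union>i\<in>I. {\<delta>. a i \<delta> \<noteq> 0})"
    using fin a unfolding gr_ring_reps_def by blast
  moreover have "\<And>i \<delta>. i \<in> I \<Longrightarrow> a i \<delta> \<in> Pge \<nu> \<delta>"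
    using a unfolding gr_ring_reps_def Pge_def by blast
  ultimately show ?thesis
    using a unfolding gr_ring_reps_def by (auto intro!: Pge_sum[OF val] intro: finite_subset)
qed

lemma gr_act_sum:
  assumes fin: "finite I" and supp: "\<And>i. i \<in> I \<Longrightarrow> finite {\<delta>. a i \<delta> \<noteq> 0}"
  shows "gr_act (\<lambda>\<delta>. \<Sum>i\<in>I. a i \<delta>) c \<gamma> = (\<Sum>i\<in>I. gr_act (a i) c \<gamma>)"
proof -
  define S where "S = (\<Union>i\<in>I. {\<delta>. a i \<delta> \<noteq> 0})"
  have S: "finite S" using fin supp unfolding S_def by blast
  have "gr_act (\<lambda>\<delta>. \<Sum>i\<in>I. a i \<delta>) c \<gamma> = (\<Sum>\<delta>\<in>S. (\<Sum>i\<in>I. a i \<delta>) * c (\<gamma> - \<delta>))"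
    using S unfolding S_def by (intro gr_act_superset) (auto elim: sum.not_neutral_contains_not_neutral)
  also have "\<dots> = (\<Sum>i\<in>I. \<Sum>\<delta>\<in>S. a i \<delta> * c (\<gamma> - \<delta>))"
    by (simp add: sum_distrib_right sum.swap[of _ S])
  also have "\<dots> = (\<Sum>i\<in>I. gr_act (a i) c \<gamma>)"
    using S unfolding S_def by (intro sum.cong refl gr_act_superset[symmetric]) auto
  finally show ?thesis .
qed

lemma gr_span_sum:
  assumes val: "valuation_on_ring \<nu>" and fin: "finite I"
    and c: "\<And>i. i \<in> I \<Longrightarrow> c i \<in> gr_span \<nu> \<Psi> G"
  shows "(\<lambda>\<gamma>. \<Sum>i\<in>I. c i \<gamma>) \<in> gr_span \<nu> \<Psi> G"
proof -
  obtain a where a: "\<And>i g. i \<in> I \<Longrightarrow> g \<in> G \<Longrightarrow> a i g \<in> gr_ring_reps \<nu> \<Psi>"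
    and eq: "\<And>i. i \<in> I \<Longrightarrow> gr_eq \<nu> (c i) (\<lambda>\<gamma>. \<Sum>g\<in>G. gr_act (a i g) g \<gamma>)"
    using c unfolding gr_span_def mem_Collect_eq by (metis (no_types))
  define b where "b g = (\<lambda>\<delta>. \<Sum>i\<in>I. a i g \<delta>)" for g
  have b: "\<And>g. g \<in> G \<Longrightarrow> b g \<in> gr_ring_reps \<nu> \<Psi>"
    unfolding b_def using a by (intro gr_ring_reps_sum[OF val fin]) auto
  have act: "(\<Sum>g\<in>G. gr_act (b g) g \<gamma>) = (\<Sum>i\<in>I. \<Sum>g\<in>G. gr_act (a i g) g \<gamma>)" for \<gamma>
  proof -
    have "\<And>g. g \<in> G \<Longrightarrow> gr_act (b g) g \<gamma> = (\<Sum>i\<in>I. gr_act (a i g) g \<gamma>)"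
      unfolding b_def using a fin by (intro gr_act_sum) (auto simp: gr_ring_reps_def)
    then show ?thesis by (simp add: sum.swap[of _ I])
  qed
  have "gr_eq \<nu> (\<lambda>\<gamma>. \<Sum>i\<in>I. c i \<gamma>) (\<lambda>\<gamma>. \<Sum>g\<in>G. gr_act (b g) g \<gamma>)"
    unfolding gr_eq_def act sum_subtractf[symmetric]
    using eq unfolding gr_eq_def by (blast intro: Pgt_sum[OF val])
  then show ?thesis using b unfolding gr_span_def by blast
qed

lemma gr_span_of_Pgt:
  assumes "\<And>\<gamma>. c \<gamma> \<in> Pgt \<nu> \<gamma>"
  shows "c \<in> gr_span \<nu> \<Psi> G"
proof -
  have "(\<lambda>\<delta>. 0) \<in> gr_ring_reps \<nu> \<Psi>" unfolding gr_ring_reps_def by simp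
  moreover have "gr_eq \<nu> c (\<lambda>\<gamma>. \<Sum>g\<in>G. gr_act (\<lambda>\<delta>. 0) g \<gamma>)"
    using assms unfolding gr_eq_def gr_act_def by simp
  ultimately show ?thesis unfolding gr_span_def by (auto intro!: exI[of _ "\<lambda>g \<delta>. 0"])
qed

text \<open>When nu f = gamma = nu h + m, residual rationality gives r
  with f - r h fm m in P_gamma^+, so r h is the required coefficient of the generator for m.\<close>
lemma homog_in_span:
  assumes val: "valuation_on_ring \<nu>" and nonneg: "\<And>f. f \<noteq> 0 \<Longrightarrow> 0 \<le> \<nu> f"
    and residue: "residually_rational \<nu>"
    and M: "finite M" and fm: "\<And>m. m \<in> M \<Longrightarrow> fm m \<noteq> 0 \<and> \<nu> (fm m) = m"
    and cover: "F_level \<nu> \<Psi> \<gamma>0 \<subseteq> {s + m | s m. s \<in> Fbar \<nu> \<Psi> \<and> m \<in> M}"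
    and \<gamma>: "\<gamma> - \<gamma>0 \<in> \<Psi>" and f: "f \<in> Pge \<nu> \<gamma>"
  shows "homog \<gamma> f \<in> gr_span \<nu> \<Psi> ((\<lambda>m. homog m (fm m)) ` M)"
proof (cases "f \<in> Pgt \<nu> \<gamma>")
  case True
  then show ?thesis by (intro gr_span_of_Pgt) (auto simp: homog_def Pgt_def)
next
  case False
  then have f0: "f \<noteq> 0" and vf: "\<nu> f = \<gamma>" using f unfolding Pge_def Pgt_def by auto
  then have "\<gamma> \<in> F_level \<nu> \<Psi> \<gamma>0" using \<gamma> unfolding F_level_def by force
  then obtain h m where h: "h \<noteq> 0" "\<nu> h \<in> \<Psi>" and m: "m \<in> M" and \<gamma>_eq: "\<gamma> = \<nu> h + m"
    using cover unfolding Fbar_def by blast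
  have hfm: "h * fm m \<noteq> 0" "\<nu> (h * fm m) = \<gamma>"
    using h fm[OF m] valuation_mult[OF val h(1)] \<gamma>_eq by auto
  obtain r where r: "f - r * (h * fm m) \<in> Pgt \<nu> \<gamma>"
  proof -
    obtain r where "f - r * (h * fm m) = 0 \<or> \<nu> (h * fm m) < \<nu> (f - r * (h * fm m))"
      using residue f0 hfm vf unfolding residually_rational_def by blast
    then show ?thesis using that hfm(2) unfolding Pgt_def by blast
  qed
  define g0 where "g0 = homog m (fm m)"
  define a where "a g = (if g = g0 then homog (\<nu> h) (r * h) else (\<lambda>\<delta>. 0))" for g
  have rh: "r * h \<in> Pge \<nu> (\<nu> h)" using Pge_mult[OF val nonneg, of h "\<nu> h" r] by (simp add: Pge_def)
  have coeff: "a g \<in> gr_ring_reps \<nu> \<Psi>" for g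
    unfolding a_def using homog_ring_rep[OF h(2) nonneg[OF h(1)] rh]
    by (auto simp: gr_ring_reps_def)
  have "gr_act (a g) g \<gamma>' = (if g = g0 then homog \<gamma> (r * h * fm m) \<gamma>' else 0)" for g \<gamma>'
  proof (cases "g = g0")
    case True
    have "finite {\<delta>. homog (\<nu> h) (r * h) \<delta> \<noteq> 0}" using coeff[of g0] by (simp add: a_def gr_ring_reps_def)
    then have "gr_act (a g) g \<gamma>' = homog (\<nu> h) (r * h) (\<gamma>' - m) * fm m"
      using True by (simp add: a_def g0_def gr_act_homog)
    then show ?thesis using True \<gamma>_eq by (auto simp: homog_def diff_eq_eq)
  qed (simp add: a_def gr_act_def)
  then have "(\<Sum>g\<in>(\<lambda>m. homog m (fm m)) ` M. gr_act (a g) g \<gamma>') = homog \<gamma> (r * h * fm m) \<gamma>'" for \<gamma>'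
    using M m by (simp add: g0_def)
  then have "gr_eq \<nu> (homog \<gamma> f) (\<lambda>\<gamma>'. \<Sum>g\<in>(\<lambda>m. homog m (fm m)) ` M. gr_act (a g) g \<gamma>')"
    using r unfolding gr_eq_def by (simp add: homog_def Pgt_def mult.assoc)
  then show ?thesis using coeff unfolding gr_span_def by blast
qed

text \<open>(<=): generators of F_{gamma1} over Fbar yield generators of the graded module, by
  decomposing an element into homogeneous pieces.\<close>
lemma gr_module_fg_if_fg_semigroup_module:
  assumes val: "valuation_on_ring \<nu>" and nonneg: "\<And>f. f \<noteq> 0 \<Longrightarrow> 0 \<le> \<nu> f"
    and residue: "residually_rational \<nu>"
    and fg: "fg_semigroup_module (Fbar \<nu> \<Psi>) (F_level \<nu> \<Psi> \<gamma>0)"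
  shows "gr_module_fg \<nu> \<Psi> \<gamma>0"
proof -
  obtain M where M: "finite M" "M \<subseteq> F_level \<nu> \<Psi> \<gamma>0"
    and cover: "F_level \<nu> \<Psi> \<gamma>0 = {s + m | s m. s \<in> Fbar \<nu> \<Psi> \<and> m \<in> M}"
    using fg unfolding fg_semigroup_module_def by blast
  have "\<forall>m\<in>M. \<exists>f. f \<noteq> 0 \<and> \<nu> f = m \<and> m - \<gamma>0 \<in> \<Psi>"
    using M(2) unfolding F_level_def by blast
  then obtain fm where fm: "\<And>m. m \<in> M \<Longrightarrow> fm m \<noteq> 0 \<and> \<nu> (fm m) = m \<and> m - \<gamma>0 \<in> \<Psi>"
    by metis
  define G where "G = (\<lambda>m. homog m (fm m)) ` M"
  have "G \<subseteq> gr_mod_reps \<nu> \<Psi> \<gamma>0"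
    unfolding G_def using fm by (auto intro!: homog_mod_rep simp: Pge_def)
  moreover have "c \<in> gr_span \<nu> \<Psi> G" if c: "c \<in> gr_mod_reps \<nu> \<Psi> \<gamma>0" for c
  proof -
    have fin: "finite {\<gamma>. c \<gamma> \<noteq> 0}" using c unfolding gr_mod_reps_def by blast
    have "homog \<gamma> (c \<gamma>) \<in> gr_span \<nu> \<Psi> G" if "c \<gamma> \<noteq> 0" for \<gamma>
      unfolding G_def using c that fm cover
      by (intro homog_in_span[OF val nonneg residue M(1)]) (auto simp: gr_mod_reps_def)
    then have "(\<lambda>\<gamma>. \<Sum>\<gamma>'\<in>{\<gamma>. c \<gamma> \<noteq> 0}. homog \<gamma>' (c \<gamma>') \<gamma>) \<in> gr_span \<nu> \<Psi> G"
      by (intro gr_span_sum[OF val fin]) auto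
    then show ?thesis by (subst homog_decomposition[OF fin])
  qed
  ultimately show ?thesis unfolding gr_module_fg_iff_span G_def using M(1) by blast
qed

lemma F_level_closed:
  assumes val: "valuation_on_ring \<nu>" and Psi: "convex_subgroup \<Psi>"
    and s: "s \<in> Fbar \<nu> \<Psi>" and x: "x \<in> F_level \<nu> \<Psi> \<gamma>0"
  shows "s + x \<in> F_level \<nu> \<Psi> \<gamma>0"
proof -
  obtain h where h: "h \<noteq> 0" "\<nu> h \<in> \<Psi>" "s = \<nu> h" using s unfolding Fbar_def by blast
  obtain f where f: "f \<noteq> 0" "\<nu> f - \<gamma>0 \<in> \<Psi>" "x = \<nu> f" using x unfolding F_level_def by blast
  have "\<nu> h + (\<nu> f - \<gamma>0) \<in> \<Psi>" using Psi h f unfolding convex_subgroup_def by blast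
  then have "\<nu> (h * f) - \<gamma>0 \<in> \<Psi>" using valuation_mult[OF val h(1) f(1)] by (simp add: algebra_simps)
  moreover have "\<nu> (h * f) = s + x" "h * f \<noteq> 0" using valuation_mult[OF val h(1) f(1)] h f by simp_all
  ultimately show ?thesis unfolding F_level_def by (auto intro!: exI[of _ "h * f"])
qed

lemma leading_term:
  assumes val: "valuation_on_ring \<nu>"
    and G: "finite G" "G \<subseteq> gr_mod_reps \<nu> \<Psi> \<gamma>0"
    and a: "\<And>g. g \<in> G \<Longrightarrow> a g \<in> gr_ring_reps \<nu> \<Psi>"
    and f: "f \<noteq> 0" and approx: "f - (\<Sum>g\<in>G. gr_act (a g) g (\<nu> f)) \<in> Pgt \<nu> (\<nu> f)"
  obtains g \<delta> where "g \<in> G" "a g \<delta> \<noteq> 0" "\<delta> \<in> \<Psi>" "\<nu> (a g \<delta>) = \<delta>"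
    "g (\<nu> f - \<delta>) \<noteq> 0" "\<nu> (g (\<nu> f - \<delta>)) = \<nu> f - \<delta>"
proof -
  let ?x = "\<nu> f"
  have "\<exists>g\<in>G. \<exists>\<delta>. a g \<delta> \<noteq> 0 \<and> a g \<delta> * g (?x - \<delta>) \<notin> Pgt \<nu> ?x"
  proof (rule ccontr)
    assume "\<not> ?thesis"
    then have "gr_act (a g) g ?x \<in> Pgt \<nu> ?x" if "g \<in> G" for g
      unfolding gr_act_def using that by (intro Pgt_sum[OF val]) auto
    then have "(\<Sum>g\<in>G. gr_act (a g) g ?x) \<in> Pgt \<nu> ?x" by (intro Pgt_sum[OF val])
    from Pgt_add[OF val approx this] have "f \<in> Pgt \<nu> ?x" by simp
    then show False using f unfolding Pgt_def by simp
  qed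
  then obtain g \<delta> where g: "g \<in> G" and a0: "a g \<delta> \<noteq> 0"
    and big: "a g \<delta> * g (?x - \<delta>) \<notin> Pgt \<nu> ?x" by blast
  have g0: "g (?x - \<delta>) \<noteq> 0" using big unfolding Pgt_def by auto
  have "\<nu> (a g \<delta>) + \<nu> (g (?x - \<delta>)) \<le> ?x"
    using big valuation_mult[OF val a0 g0] unfolding Pgt_def by auto
  moreover have "\<delta> \<in> \<Psi>" "\<delta> \<le> \<nu> (a g \<delta>)" using a[OF g] a0 unfolding gr_ring_reps_def Pge_def by auto
  moreover have "?x - \<delta> \<le> \<nu> (g (?x - \<delta>))" using G(2) g g0 unfolding gr_mod_reps_def Pge_def by auto
  ultimately show ?thesis using that g a0 g0 sum_of_lower_bounds_eq by blast
qed

lemma fg_semigroup_module_if_gr_module_fg: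
  assumes val: "valuation_on_ring \<nu>" and Psi: "convex_subgroup \<Psi>"
    and fg: "gr_module_fg \<nu> \<Psi> \<gamma>0"
  shows "fg_semigroup_module (Fbar \<nu> \<Psi>) (F_level \<nu> \<Psi> \<gamma>0)"
proof -
  obtain G where G: "finite G" "G \<subseteq> gr_mod_reps \<nu> \<Psi> \<gamma>0" "gr_mod_reps \<nu> \<Psi> \<gamma>0 \<subseteq> gr_span \<nu> \<Psi> G"
    using fg unfolding gr_module_fg_iff_span by blast
  define M where "M = {\<gamma>. \<exists>g\<in>G. g \<gamma> \<noteq> 0 \<and> \<nu> (g \<gamma>) = \<gamma>}"
  have "finite (\<Union>g\<in>G. {\<gamma>. g \<gamma> \<noteq> 0})" using G(1,2) unfolding gr_mod_reps_def by blast
  then have M_fin: "finite M" unfolding M_def by (rule finite_subset[rotated]) blast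
  have M_sub: "M \<subseteq> F_level \<nu> \<Psi> \<gamma>0"
    using G(2) unfolding M_def F_level_def gr_mod_reps_def by force
  have "F_level \<nu> \<Psi> \<gamma>0 \<subseteq> {s + m | s m. s \<in> Fbar \<nu> \<Psi> \<and> m \<in> M}"
  proof
    fix x assume x: "x \<in> F_level \<nu> \<Psi> \<gamma>0"
    obtain f where f: "f \<noteq> 0" "\<nu> f - \<gamma>0 \<in> \<Psi>" "x = \<nu> f" using x unfolding F_level_def by blast
    then have "homog x f \<in> gr_span \<nu> \<Psi> G" using G(3) homog_mod_rep[of x \<gamma>0 \<Psi> f \<nu>]
      by (auto simp: Pge_def)
    then obtain a where a: "\<And>g. g \<in> G \<Longrightarrow> a g \<in> gr_ring_reps \<nu> \<Psi>"
      and eq: "gr_eq \<nu> (homog x f) (\<lambda>\<gamma>. \<Sum>g\<in>G. gr_act (a g) g \<gamma>)"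
      unfolding gr_span_def by blast
    have "f - (\<Sum>g\<in>G. gr_act (a g) g (\<nu> f)) \<in> Pgt \<nu> (\<nu> f)"
      using eq f(3) unfolding gr_eq_def by (auto simp: homog_def elim: allE[of _ "\<nu> f"])
    then obtain g \<delta> where g: "g \<in> G" "g (x - \<delta>) \<noteq> 0" "\<nu> (g (x - \<delta>)) = x - \<delta>"
      and coeff: "a g \<delta> \<noteq> 0" "\<delta> \<in> \<Psi>" "\<nu> (a g \<delta>) = \<delta>"
      using leading_term[OF val G(1,2), of a f] a f by blast
    have "\<delta> \<in> Fbar \<nu> \<Psi>" unfolding Fbar_def using coeff by (auto intro!: exI[of _ "a g \<delta>"])
    moreover have "x - \<delta> \<in> M" unfolding M_def using g by blast
    moreover have "x = \<delta> + (x - \<delta>)" by simp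
    ultimately show "x \<in> {s + m | s m. s \<in> Fbar \<nu> \<Psi> \<and> m \<in> M}" by blast
  qed
  moreover have "{s + m | s m. s \<in> Fbar \<nu> \<Psi> \<and> m \<in> M} \<subseteq> F_level \<nu> \<Psi> \<gamma>0"
    using F_level_closed[OF val Psi] M_sub by blast
  ultimately show ?thesis
    unfolding fg_semigroup_module_def using F_level_closed[OF val Psi] M_fin M_sub by blast
qed

theorem mainTheorem1:
  fixes \<nu> :: "'a::idom \<Rightarrow> 'g::linordered_ab_group_add"
    and \<Psi> :: "'g set"
    and \<gamma>0 :: 'g
  assumes noeth: "noetherian_ring TYPE('a)"
    and loc: "local_ring TYPE('a)"
    and val: "valuation_on_ring \<nu>"
    and vgroup: "value_group_all \<nu>"
    and center: "centered_on_max \<nu>"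
    and residue: "residually_rational \<nu>"
    and rank: "finite_rank TYPE('g)"
    and Psi: "smallest_nonzero_convex \<Psi>"
  shows "gr_module_fg \<nu> \<Psi> \<gamma>0 \<longleftrightarrow> fg_semigroup_module (Fbar \<nu> \<Psi>) (F_level \<nu> \<Psi> \<gamma>0)"
proof
  assume "gr_module_fg \<nu> \<Psi> \<gamma>0"
  moreover have "convex_subgroup \<Psi>"
    using Psi unfolding smallest_nonzero_convex_def by blast
  ultimately show "fg_semigroup_module (Fbar \<nu> \<Psi>) (F_level \<nu> \<Psi> \<gamma>0)"
    using fg_semigroup_module_if_gr_module_fg[OF val] by blast
next
  assume "fg_semigroup_module (Fbar \<nu> \<Psi>) (F_level \<nu> \<Psi> \<gamma>0)"
  moreover have "\<And>f. f \<noteq> 0 \<Longrightarrow> 0 \<le> \<nu> f"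
    using center unfolding centered_on_max_def by blast
  ultimately show "gr_module_fg \<nu> \<Psi> \<gamma>0"
    using gr_module_fg_if_fg_semigroup_module[OF val _ residue] by blast
qed

end
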